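(* For $k=1,\dots,5$ let $F_k(s)=C_k(sI-A_k)^{-1}B_k$ be strictly proper transfer functions with complex matrices of compatible dimensions and $A_k$ Hurwitz. Let $Q_{12},P_{23},Q_{34},P_{45}$ be the unique solutions of $$A_1^*Q_{12}+Q_{12}A_2+C_1^*C_2=0,\quad A_2P_{23}+P_{23}A_3^*+B_2B_3^*=0,$$ $$A_3^*Q_{34}+Q_{34}A_4+C_3^*C_4=0,\quad A_4P_{45}+P_{45}A_5^*+B_4B_5^*=0,$$ and let $Q_{14},P_{25}$ be the unique solutions of $$A_1^*Q_{14}+Q_{14}A_4+Q_{12}P_{23}C_3^*C_4+C_1^*C_2P_{23}Q_{34}=0,\qquad A_2P_{25}+P_{25}A_5^*+P_{23}C_3^*C_4P_{45}=0 .$$ Then $$\mathbf M(F_1,\dots,F_5):=\frac1{2\pi}\int_{\mathbb R}F_1(i\lambda)^*F_2(i\lambda)F_3(i\lambda)^*F_4(i\lambda)F_5(i\lambda)^*\,d\lambda=B_1^*\big(Q_{12}P_{25}+Q_{14}P_{45}\big)C_5^* .$$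
   Context: $(\cdot)^*$ is the conjugate transpose; dimensions are such that all products above are defined. *)

theory Defs
  imports "HOL-Analysis.Analysis"
begin

definition cadj :: "complex^'n^'m \<Rightarrow> complex^'m^'n" where
  "cadj A = (\<chi> i j. cnj (A $ j $ i))"

definition hurwitz :: "complex^'n^'n \<Rightarrow> bool" where
  "hurwitz A \<longleftrightarrow> (\<forall>\<mu> v. v \<noteq> 0 \<and> A *v v = \<mu> *s v \<longrightarrow> Re \<mu> < 0)"

definition tf :: "complex^'n^'p \<Rightarrow> complex^'n^'n \<Rightarrow> complex^'m^'n \<Rightarrow> complex \<Rightarrow> complex^'m^'p" where
  "tf C A B s = C ** matrix_inv (mat s - A) ** B"

end

theory Submission
  imports Defs "HOL-Complex_Analysis.Complex_Analysis" "HOL-Probability.Sinc_Integral"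
begin

text \<open>On the imaginary axis each transfer function is \<open>C\<^sub>k R\<^sub>k(s) B\<^sub>k\<close> with the resolvent
  \<open>R\<^sub>k(s) = (s I - A\<^sub>k)\<^sup>-\<^sup>1\<close>, and a solution of the Sylvester equation \<open>A\<^sup>* Q + Q B + N = 0\<close>
  turns \<open>R\<^sub>a(s)\<^sup>* N R\<^sub>b(s)\<close> into \<open>Q R\<^sub>b(s) + R\<^sub>a(s)\<^sup>* Q\<close> (dually for the \<open>P\<close>-equations).
  Six such substitutions rewrite the integrand as \<open>B\<^sub>1\<^sup>* G(s) C\<^sub>5\<^sup>*\<close>, where \<open>G\<close> is a sum of seven
  terms, each containing only resolvents or only adjoint resolvents. A product of at least two
  resolvents is analytic on the closed right half-plane and \<open>O(|s|\<^sup>-\<^sup>2)\<close> there, so closing the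
  contour by a semicircle shows that its principal-value integral along the imaginary axis vanishes;
  a single resolvent has principal value \<open>\<pi> I\<close>. The four single-resolvent terms give
  \<open>2\<pi> (Q\<^sub>1\<^sub>2 P\<^sub>2\<^sub>5 + Q\<^sub>1\<^sub>4 P\<^sub>4\<^sub>5)\<close>, and since the integrand is \<open>O(|\<lambda>|\<^sup>-\<^sup>5)\<close> the
  principal value is the integral.\<close>

lemma matrix_add_rdistrib: "((A::'a::semiring_1^'n^'m) + B) ** C = A ** C + B ** C"
  by (vector matrix_matrix_mult_def sum.distrib[symmetric] field_simps)

lemma matrix_diff_ldistrib: "(A::'a::ring_1^'n^'m) ** (B - C) = A ** B - A ** C"
  by (vector matrix_matrix_mult_def sum_subtractf[symmetric] field_simps)

lemma matrix_diff_rdistrib: "((A::'a::ring_1^'n^'m) - B) ** C = A ** C - B ** C"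
  by (vector matrix_matrix_mult_def sum_subtractf[symmetric] field_simps)

lemma mat_diff: "mat a - mat b = (mat (a - b) :: 'a::ab_group_add^'n^'n)"
  by (simp add: vec_eq_iff mat_def)

lemma mat_matrix_mult_nth: "(mat c ** X) $ i $ j = c * (X $ i $ j :: 'a::semiring_1)"
  by (simp add: matrix_matrix_mult_def mat_def if_distrib if_distribR sum.delta cong: if_cong)

lemma matrix_mat_mult_nth: "(X ** mat c) $ i $ j = (X $ i $ j :: 'a::semiring_1) * c"
  by (simp add: matrix_matrix_mult_def mat_def if_distrib if_distribR sum.delta' cong: if_cong)

lemma mat_mult_mat: "mat a ** mat b = (mat (a * b) :: 'a::semiring_1^'n^'n)"
  by (simp add: vec_eq_iff mat_matrix_mult_nth) (simp add: mat_def)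

lemma matrix_vector_mult_axis_nth: "(M *v axis j 1) $ k = (M $ k $ j :: 'a::semiring_1)"
  by (simp add: matrix_vector_mult_def axis_def if_distrib if_distribR sum.delta' cong: if_cong)

lemma mat_matrix_vector_mult: "mat c *v v = c *s (v :: 'a::semiring_1^'n)"
  by (simp add: vec_eq_iff matrix_vector_mult_def mat_def if_distrib if_distribR sum.delta cong: if_cong)

lemma mat_of_real: "mat (of_real r) = (r *\<^sub>R mat 1 :: 'a::real_algebra_1^'n^'n)"
  by (simp add: vec_eq_iff mat_def of_real_def)

lemma norm_mat_matrix_mult: "norm (mat c ** X) = norm (c::'a::real_normed_field) * norm X"
proof -
  have "mat c ** X = (\<chi> i. c *s X $ i)"
    by (simp add: vec_eq_iff mat_matrix_mult_nth)
  then show ?thesis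
    by (simp add: norm_vec_def norm_mult L2_set_right_distrib)
qed

lemma norm_matrix_nth_le: "norm (A $ i $ j) \<le> norm A"
  using Finite_Cartesian_Product.norm_nth_le[of "A $ i" j] Finite_Cartesian_Product.norm_nth_le[of A i]
  by linarith

lemma bounded_bilinear_matrix_matrix_mult:
  "bounded_bilinear ((**) :: complex^'n^'m \<Rightarrow> complex^'p^'n \<Rightarrow> complex^'p^'m)"
proof -
  have "bilinear ((**) :: complex^'n^'m \<Rightarrow> complex^'p^'n \<Rightarrow> complex^'p^'m)"
    unfolding bilinear_def
    by (auto intro!: linearI simp: matrix_add_ldistrib matrix_add_rdistrib
        scalar_matrix_assoc matrix_scalar_ac)
  then show ?thesis
    by (simp add: bilinear_conv_bounded_bilinear)
qed

lemma bounded_linear_mat: "bounded_linear (mat :: complex \<Rightarrow> complex^'n^'n)"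
proof -
  have "linear (mat :: complex \<Rightarrow> complex^'n^'n)"
    by (rule linearI) (simp_all add: vec_eq_iff mat_def)
  then show ?thesis
    by (simp add: linear_conv_bounded_linear)
qed

lemma bounded_linear_matrix_sandwich: "bounded_linear (\<lambda>M::complex^'n^'m. X ** M ** Y)"
  by (rule bounded_linear_compose[OF bounded_bilinear.bounded_linear_left bounded_bilinear.bounded_linear_right])
    (rule bounded_bilinear_matrix_matrix_mult)+

lemma matrix_inv_unique:
  assumes "A ** B = mat 1" "B ** A = mat 1"
  shows "matrix_inv A = (B :: 'a::semiring_1^'n^'m)"
proof -
  have "A ** matrix_inv A = mat 1 \<and> matrix_inv A ** A = mat 1"
    unfolding matrix_inv_def using assms by (rule someI[of _ B, OF conjI])
  then show ?thesis
    by (metis assms(2) matrix_mul_assoc matrix_mul_lid matrix_mul_rid)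
qed

lemma matrix_inv_inverse:
  assumes "invertible (A :: 'a::semiring_1^'n^'m)"
  shows "A ** matrix_inv A = mat 1" "matrix_inv A ** A = mat 1"
  using someI_ex[OF assms[unfolded invertible_def]] unfolding matrix_inv_def by auto

lemma matrix_inv_nth_cramer:
  fixes M :: "'a::field^'n^'n"
  assumes "det M \<noteq> 0"
  shows "matrix_inv M $ k $ j = det (\<chi> i l. if l = k then axis j 1 $ i else M $ i $ l) / det M"
proof -
  have "M *v (matrix_inv M *v axis j 1) = axis j 1"
    using matrix_inv_inverse(1) invertible_det_nz assms
    by (metis matrix_vector_mul_assoc matrix_vector_mul_lid)
  then have "matrix_inv M *v axis j 1
      = (\<chi> k. det (\<chi> i l. if l = k then axis j 1 $ i else M $ i $ l) / det M)"
    using cramer[OF assms] by blast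
  then show ?thesis
    by (simp flip: matrix_vector_mult_axis_nth)
qed

lemma cadj_nth [simp]: "cadj A $ i $ j = cnj (A $ j $ i)"
  by (simp add: cadj_def)

lemma cadj_cadj [simp]: "cadj (cadj A) = A"
  by (simp add: vec_eq_iff)

lemma cadj_zero [simp]: "cadj 0 = 0"
  by (simp add: vec_eq_iff)

lemma cadj_add: "cadj (A + B) = cadj A + cadj B"
  by (simp add: vec_eq_iff)

lemma cadj_diff: "cadj (A - B) = cadj A - cadj B"
  by (simp add: vec_eq_iff)

lemma cadj_scaleR: "cadj (r *\<^sub>R A) = r *\<^sub>R cadj A"
  by (simp add: vec_eq_iff)

lemma cadj_mat: "cadj (mat c) = mat (cnj c)"
  by (simp add: vec_eq_iff mat_def)

lemma cadj_matrix_mult: "cadj (A ** B) = cadj B ** cadj A"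
  by (simp add: vec_eq_iff matrix_matrix_mult_def mult.commute)

lemma norm_cadj [simp]: "norm (cadj A) = norm A"
proof -
  have "(norm (cadj A))\<^sup>2 = (norm A)\<^sup>2"
    by (simp add: norm_vec_def L2_set_def sum_nonneg) (subst sum.swap, simp)
  then show ?thesis
    by (simp add: power2_eq_iff_nonneg)
qed

lemma bounded_linear_cadj: "bounded_linear cadj"
  by (rule bounded_linear_intro[where K = 1]) (auto simp: cadj_add cadj_scaleR)

lemma matrix_inv_cadj:
  assumes "invertible A"
  shows "invertible (cadj A)" "matrix_inv (cadj A) = cadj (matrix_inv A)"
proof -
  have "cadj A ** cadj (matrix_inv A) = mat 1" "cadj (matrix_inv A) ** cadj A = mat 1"
    using matrix_inv_inverse[OF assms] by (simp_all flip: cadj_matrix_mult add: cadj_mat)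
  then show "invertible (cadj A)" "matrix_inv (cadj A) = cadj (matrix_inv A)"
    by (auto simp: invertible_def intro: matrix_inv_unique)
qed

section \<open>Resolvents\<close>

definition resolvent :: "complex^'n^'n \<Rightarrow> complex \<Rightarrow> complex^'n^'n" where
  "resolvent A z = matrix_inv (mat z - A)"

lemma tf_resolvent: "tf C A B s = C ** resolvent A s ** B"
  by (simp add: tf_def resolvent_def)

lemma resolvent_inverse:
  assumes "invertible (mat z - A)"
  shows "(mat z - A) ** resolvent A z = mat 1" "resolvent A z ** (mat z - A) = mat 1"
  using matrix_inv_inverse[OF assms] by (simp_all add: resolvent_def)

lemma cadj_resolvent:
  assumes "invertible (mat z - A)"
  shows "cadj (resolvent A z) = resolvent (cadj A) (cnj z)"
  using matrix_inv_cadj(2)[OF assms] by (simp add: resolvent_def cadj_diff cadj_mat)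

lemma resolvent_mat:
  assumes "z \<noteq> c"
  shows "resolvent (mat c) z = mat (1 / (z - c))"
  unfolding resolvent_def using assms
  by (intro matrix_inv_unique) (simp_all add: mat_diff mat_mult_mat)

lemma resolvent_difference:
  assumes "invertible (mat z - A)" "invertible (mat z - B)"
  shows "resolvent A z - resolvent B z = resolvent A z ** (A - B) ** resolvent B z"
proof -
  have "A - B = (mat z - B) - (mat z - A)"
    by simp
  then have "resolvent A z ** (A - B) ** resolvent B z
      = resolvent A z ** ((mat z - B) ** resolvent B z) - (resolvent A z ** (mat z - A)) ** resolvent B z"
    by (simp add: matrix_diff_ldistrib matrix_diff_rdistrib matrix_mul_assoc)
  then show ?thesis
    by (simp add: resolvent_inverse assms)
qed

text \<open>A solution of the Sylvester equation \<open>A Q + Q B + N = 0\<close> splits the product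
  \<open>(z - A)\<^sup>-\<^sup>1 N (-z - B)\<^sup>-\<^sup>1\<close> into two single-resolvent terms, because
  \<open>N = (z - A) Q + Q (-z - B)\<close>.\<close>
lemma resolvent_sylvester:
  assumes "invertible (mat z - A)" "invertible (mat (- z) - B)"
    and "A ** Q + Q ** B + N = 0"
  shows "resolvent A z ** N ** resolvent B (- z) = Q ** resolvent B (- z) + resolvent A z ** Q"
proof -
  have "(mat z - A) ** Q + Q ** (mat (- z) - B) = (mat z ** Q + Q ** mat (- z)) - (A ** Q + Q ** B)"
    by (simp add: matrix_diff_ldistrib matrix_diff_rdistrib algebra_simps)
  also have "mat z ** Q + Q ** mat (- z) = 0"
    by (simp add: vec_eq_iff mat_matrix_mult_nth matrix_mat_mult_nth)
  finally have "(mat z - A) ** Q + Q ** (mat (- z) - B) = - (A ** Q + Q ** B)"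
    by simp
  moreover have "N = - (A ** Q + Q ** B)"
    using assms(3) by (metis add.commute add_eq_0_iff2)
  ultimately have N: "N = (mat z - A) ** Q + Q ** (mat (- z) - B)"
    by simp
  have "resolvent A z ** N ** resolvent B (- z)
      = (resolvent A z ** (mat z - A)) ** Q ** resolvent B (- z)
        + resolvent A z ** Q ** ((mat (- z) - B) ** resolvent B (- z))"
    by (simp add: N matrix_add_ldistrib matrix_add_rdistrib matrix_mul_assoc)
  then show ?thesis
    by (simp add: resolvent_inverse assms(1,2))
qed

lemma hurwitz_invertible:
  assumes "hurwitz A" "0 \<le> Re z"
  shows "invertible (mat z - A)"
proof (rule ccontr)
  assume "\<not> invertible (mat z - A)"
  then obtain v where v: "(mat z - A) *v v = 0" "v \<noteq> 0"
    using invertible_left_inverse matrix_left_invertible_ker by blast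
  then have "A *v v = z *s v"
    by (simp add: matrix_vector_mult_diff_rdistrib mat_matrix_vector_mult)
  with assms v(2) show False
    unfolding hurwitz_def by fastforce
qed

lemma hurwitz_mat:
  assumes "Re c < 0"
  shows "hurwitz (mat c)"
  unfolding hurwitz_def
proof (intro allI impI)
  fix \<mu> and v :: "complex^'n"
  assume v: "v \<noteq> 0 \<and> mat c *v v = \<mu> *s v"
  then obtain i where "v $ i \<noteq> 0"
    by (metis vec_eq_iff zero_index)
  with v have "\<mu> = c"
    by (auto simp: mat_matrix_vector_mult vec_eq_iff dest: spec[of _ i])
  with assms show "Re \<mu> < 0"
    by simp
qed

lemma resolvent_sylvester_cadj_left:
  assumes "hurwitz A" "hurwitz B" "Re s = 0"
    and "cadj A ** Q + Q ** B + N = 0"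
  shows "cadj (resolvent A s) ** N ** resolvent B s = Q ** resolvent B s + cadj (resolvent A s) ** Q"
proof -
  have cnj_s: "cnj s = - s"
    using assms(3) by (simp add: complex_eq_iff)
  have inv: "invertible (mat s - A)" "invertible (mat s - B)"
    using assms by (simp_all add: hurwitz_invertible)
  have "invertible (mat (- s) - cadj A)"
    using matrix_inv_cadj(1)[OF inv(1)] by (simp add: cadj_diff cadj_mat cnj_s)
  with inv(2) assms(4) show ?thesis
    using resolvent_sylvester[of "- s" "cadj A" B Q N]
    by (simp add: cadj_resolvent[OF inv(1)] cnj_s)
qed

lemma resolvent_sylvester_cadj_right:
  assumes "hurwitz A" "hurwitz B" "Re s = 0"
    and "A ** P + P ** cadj B + N = 0"
  shows "resolvent A s ** N ** cadj (resolvent B s) = P ** cadj (resolvent B s) + resolvent A s ** P"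
proof -
  have cnj_s: "cnj s = - s"
    using assms(3) by (simp add: complex_eq_iff)
  have inv: "invertible (mat s - A)" "invertible (mat s - B)"
    using assms by (simp_all add: hurwitz_invertible)
  have "invertible (mat (- s) - cadj B)"
    using matrix_inv_cadj(1)[OF inv(2)] by (simp add: cadj_diff cadj_mat cnj_s)
  with inv(1) assms(4) show ?thesis
    using resolvent_sylvester[of s A "cadj B" P N]
    by (simp add: cadj_resolvent[OF inv(2)] cnj_s)
qed

section \<open>Analyticity and decay on the closed right half-plane\<close>

definition matrix_analytic_on :: "complex set \<Rightarrow> (complex \<Rightarrow> complex^'n^'m) \<Rightarrow> bool" where
  "matrix_analytic_on S F \<longleftrightarrow> (\<forall>i j. (\<lambda>z. F z $ i $ j) analytic_on S)"

lemma matrix_analytic_on_const: "matrix_analytic_on S (\<lambda>z. X)"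
  by (simp add: matrix_analytic_on_def)

lemma matrix_analytic_on_mult:
  "matrix_analytic_on S F \<Longrightarrow> matrix_analytic_on S G \<Longrightarrow> matrix_analytic_on S (\<lambda>z. F z ** G z)"
  unfolding matrix_analytic_on_def matrix_matrix_mult_def by (auto intro!: analytic_intros)

lemma continuous_on_matrix:
  fixes F :: "'a::topological_space \<Rightarrow> 'b::topological_space^'n^'m"
  assumes "\<And>i j. continuous_on S (\<lambda>x. F x $ i $ j)"
  shows "continuous_on S F"
proof -
  have "continuous_on S (\<lambda>x. \<chi> i j. F x $ i $ j)"
    by (intro continuous_on_vec_lambda assms)
  then show ?thesis
    by simp
qed

lemma matrix_analytic_on_imp_continuous_on:
  "matrix_analytic_on S F \<Longrightarrow> continuous_on S F"
  unfolding matrix_analytic_on_def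
  by (intro continuous_on_matrix holomorphic_on_imp_continuous_on analytic_imp_holomorphic) blast

lemma holomorphic_on_det:
  fixes F :: "complex \<Rightarrow> complex^'n^'n"
  assumes "\<And>i j. (\<lambda>z. F z $ i $ j) holomorphic_on S"
  shows "(\<lambda>z. det (F z)) holomorphic_on S"
  unfolding det_def by (intro holomorphic_intros assms)

lemma matrix_analytic_on_resolvent:
  assumes "hurwitz A"
  shows "matrix_analytic_on {z. 0 \<le> Re z} (resolvent A)"
proof -
  define S where "S = {z. det (mat z - A) \<noteq> 0}"
  have entries: "(\<lambda>z. (mat z - A) $ i $ j) holomorphic_on UNIV" for i j
    by (cases "i = j") (auto simp: mat_def intro!: holomorphic_intros)
  have det: "(\<lambda>z. det (mat z - A)) holomorphic_on UNIV"
    by (intro holomorphic_on_det entries)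
  have "open S"
    unfolding S_def
    by (intro open_Collect_neq holomorphic_on_imp_continuous_on det continuous_on_const)
  have "{z. 0 \<le> Re z} \<subseteq> S"
    using hurwitz_invertible[OF assms] invertible_det_nz by (auto simp: S_def)
  moreover have "(\<lambda>z. resolvent A z $ k $ j) holomorphic_on S" for k j
  proof -
    define D where "D z = (\<chi> i l. if l = k then axis j 1 $ i else (mat z - A) $ i $ l)" for z
    have "(\<lambda>z. D z $ i $ l) holomorphic_on S" for i l
      using holomorphic_on_subset[OF entries[of i l], of S] by (cases "l = k") (simp_all add: D_def)
    then have "(\<lambda>z. det (D z) / det (mat z - A)) holomorphic_on S"
      by (intro holomorphic_intros holomorphic_on_det holomorphic_on_subset[OF entries])
        (auto simp: S_def)
    moreover have "resolvent A z $ k $ j = det (D z) / det (mat z - A)" if "z \<in> S" for z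
      using that by (simp add: S_def D_def resolvent_def matrix_inv_nth_cramer)
    ultimately show ?thesis
      by (metis (no_types, lifting) holomorphic_transform)
  qed
  ultimately show ?thesis
    unfolding matrix_analytic_on_def using \<open>open S\<close>
    by (meson analytic_on_open analytic_on_subset)
qed

definition decays_on :: "'a::real_normed_vector set \<Rightarrow> nat \<Rightarrow> ('a \<Rightarrow> 'b::real_normed_vector) \<Rightarrow> bool" where
  "decays_on S k F \<longleftrightarrow> (\<exists>M. \<forall>x\<in>S. norm (F x) * (1 + norm x) ^ k \<le> M)"

lemma decays_on_const: "decays_on S 0 (\<lambda>x. c)"
  by (auto simp: decays_on_def)

lemma decays_on_mono:
  assumes "decays_on S k F" "l \<le> k"
  shows "decays_on S l F"
proof -
  obtain M where M: "\<And>x. x \<in> S \<Longrightarrow> norm (F x) * (1 + norm x) ^ k \<le> M"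
    using assms(1) by (auto simp: decays_on_def)
  have "norm (F x) * (1 + norm x) ^ l \<le> norm (F x) * (1 + norm x) ^ k" for x
    by (intro mult_left_mono power_increasing assms(2)) auto
  with M show ?thesis
    unfolding decays_on_def by (meson order_trans)
qed

lemma decays_on_cadj: "decays_on S k F \<Longrightarrow> decays_on S k (\<lambda>x. cadj (F x))"
  by (simp add: decays_on_def)

lemma decays_on_mult:
  fixes F :: "'a::real_normed_vector \<Rightarrow> complex^'n^'m" and G :: "'a \<Rightarrow> complex^'p^'n"
  assumes "decays_on S k F" "decays_on S l G"
  shows "decays_on S (k + l) (\<lambda>x. F x ** G x)"
proof -
  obtain M1 where M1: "\<And>x. x \<in> S \<Longrightarrow> norm (F x) * (1 + norm x) ^ k \<le> M1"
    using assms(1) by (auto simp: decays_on_def)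
  obtain M2 where M2: "\<And>x. x \<in> S \<Longrightarrow> norm (G x) * (1 + norm x) ^ l \<le> M2"
    using assms(2) by (auto simp: decays_on_def)
  obtain K where K: "K \<ge> 0" "\<And>X Y. norm (X ** Y :: complex^'p^'m) \<le> norm (X :: complex^'n^'m) * norm Y * K"
    using bounded_bilinear.nonneg_bounded[OF bounded_bilinear_matrix_matrix_mult] by blast
  have "norm (F x ** G x) * (1 + norm x) ^ (k + l) \<le> K * M1 * M2" if x: "x \<in> S" for x
  proof -
    have "norm (F x ** G x) * (1 + norm x) ^ (k + l)
        \<le> K * (norm (F x) * (1 + norm x) ^ k) * (norm (G x) * (1 + norm x) ^ l)"
      using mult_right_mono[OF K(2)[of "F x" "G x"], of "(1 + norm x) ^ (k + l)"]
      by (simp add: power_add algebra_simps)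
    also have "\<dots> \<le> K * M1 * M2"
      using M1[OF x] M2[OF x] K(1) order_trans[OF _ M1[OF x]]
      by (intro mult_mono mult_left_mono) auto
    finally show ?thesis .
  qed
  then show ?thesis
    unfolding decays_on_def by blast
qed

lemma decays_on_imag_axis:
  assumes "decays_on {z. 0 \<le> Re z} k F"
  shows "decays_on UNIV k (\<lambda>t::real. F (\<i> * of_real t))"
proof -
  obtain M where "\<And>z. 0 \<le> Re z \<Longrightarrow> norm (F z) * (1 + cmod z) ^ k \<le> M"
    using assms by (auto simp: decays_on_def)
  from this[of "\<i> * of_real t" for t] show ?thesis
    by (auto simp: decays_on_def norm_mult)
qed

lemma norm_resolvent_far:
  fixes A :: "complex^'n^'n"
  shows "\<exists>K>0. \<forall>z. invertible (mat z - A) \<and> K * norm A \<le> cmod z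
      \<longrightarrow> cmod z * norm (resolvent A z) \<le> 2 * norm (mat 1 :: complex^'n^'n)"
proof -
  obtain K where K: "K > 0" "\<And>(X :: complex^'n^'n) (Y :: complex^'n^'n). norm (X ** Y) \<le> norm X * norm Y * K"
    using bounded_bilinear.pos_bounded[OF bounded_bilinear_matrix_matrix_mult] by blast
  have "cmod z * norm (resolvent A z) \<le> 2 * norm (mat 1 :: complex^'n^'n)"
    if "invertible (mat z - A)" "2 * K * norm A \<le> cmod z" for z
  proof -
    have "mat z ** resolvent A z = mat 1 + A ** resolvent A z"
      using resolvent_inverse(1)[OF that(1)] by (simp add: matrix_diff_rdistrib algebra_simps)
    then have "cmod z * norm (resolvent A z) = norm (mat 1 + A ** resolvent A z)"
      by (simp flip: norm_mat_matrix_mult)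
    also have "\<dots> \<le> norm (mat 1 :: complex^'n^'n) + norm (A ** resolvent A z)"
      by (rule norm_triangle_ineq[of "mat 1 :: complex^'n^'n"])
    also have "\<dots> \<le> norm (mat 1 :: complex^'n^'n) + norm A * norm (resolvent A z) * K"
      using K(2)[of A "resolvent A z"] by (rule add_left_mono)
    also have "norm A * norm (resolvent A z) * K \<le> cmod z * norm (resolvent A z) / 2"
      using mult_right_mono[OF that(2), of "norm (resolvent A z)"] by (simp add: algebra_simps)
    finally show ?thesis
      by simp
  qed
  with K(1) show ?thesis
    by (intro exI[of _ "2 * K"]) auto
qed

lemma decays_on_resolvent:
  fixes A :: "complex^'n^'n"
  assumes "hurwitz A"
  shows "decays_on {z. 0 \<le> Re z} 1 (resolvent A)"
proof -
  obtain K where K: "\<And>z. invertible (mat z - A) \<Longrightarrow> K * norm A \<le> cmod z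
      \<Longrightarrow> cmod z * norm (resolvent A z) \<le> 2 * norm (mat 1 :: complex^'n^'n)"
    using norm_resolvent_far by blast
  define \<rho> where "\<rho> = max 1 (K * norm A)"
  define C where "C = {z. 0 \<le> Re z} \<inter> cball 0 \<rho>"
  have "compact C"
    unfolding C_def by (intro closed_Int_compact closed_halfspace_Re_ge compact_cball)
  moreover have "continuous_on C (\<lambda>z. norm (resolvent A z))"
    using matrix_analytic_on_imp_continuous_on[OF matrix_analytic_on_resolvent[OF assms]]
    by (intro continuous_intros) (auto simp: C_def elim: continuous_on_subset)
  ultimately have "bounded ((\<lambda>z. norm (resolvent A z)) ` C)"
    by (intro compact_imp_bounded compact_continuous_image)
  then obtain B where B: "\<And>z. z \<in> C \<Longrightarrow> norm (resolvent A z) \<le> B"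
    unfolding bounded_real by (meson abs_le_D1 image_eqI)
  have "norm (resolvent A z) * (1 + cmod z) \<le> max (B * (1 + \<rho>)) (4 * norm (mat 1 :: complex^'n^'n))"
    if z: "0 \<le> Re z" for z
  proof (cases "cmod z \<le> \<rho>")
    case True
    with z B have "norm (resolvent A z) \<le> B"
      by (auto simp: C_def)
    with True have "norm (resolvent A z) * (1 + cmod z) \<le> B * (1 + \<rho>)"
      by (intro mult_mono) (auto intro: order_trans[OF norm_ge_zero])
    then show ?thesis
      by simp
  next
    case False
    then have "cmod z * norm (resolvent A z) \<le> 2 * norm (mat 1 :: complex^'n^'n)" "1 \<le> cmod z"
      using K[OF hurwitz_invertible[OF assms z]] by (auto simp: \<rho>_def)
    moreover have "norm (resolvent A z) * (1 + cmod z) \<le> 2 * (cmod z * norm (resolvent A z))"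
      using mult_left_mono[OF \<open>1 \<le> cmod z\<close>, of "norm (resolvent A z)"] by (simp add: algebra_simps)
    ultimately show ?thesis
      by linarith
  qed
  then show ?thesis
    unfolding decays_on_def by auto
qed

section \<open>Principal values along the imaginary axis\<close>

lemma path_image_right_semicircle:
  assumes "0 \<le> T"
  shows "path_image (part_circlepath 0 T (-pi/2) (pi/2)) \<subseteq> {z. 0 \<le> Re z \<and> cmod z = T}"
proof
  fix w assume w: "w \<in> path_image (part_circlepath 0 T (-pi/2) (pi/2))"
  then obtain x where x: "-pi/2 \<le> x" "x \<le> pi/2" "w = T * exp (\<i> * of_real x)"
    by (auto simp: path_image_part_circlepath)
  then have "cos x \<ge> 0"
    by (intro cos_ge_zero) auto
  with x assms in_path_image_part_circlepath[OF w] show "w \<in> {z. 0 \<le> Re z \<and> cmod z = T}"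
    by (simp add: Re_exp)
qed

lemma imag_axis_integral_eq_semicircle:
  fixes g :: "complex \<Rightarrow> complex"
  assumes cont: "continuous_on {z. 0 \<le> Re z} g"
    and diff: "\<And>z. 0 < Re z \<Longrightarrow> g field_differentiable at z"
    and T: "T > 0"
  shows "\<i> * integral {-T..T} (\<lambda>t. g (\<i> * of_real t))
    = contour_integral (part_circlepath 0 T (-pi/2) (pi/2)) g"
proof -
  define S where "S = {z. 0 \<le> Re z}"
  define arc where "arc = part_circlepath 0 T (-pi/2) (pi/2)"
  define diam where "diam = linepath (\<i> * of_real T) (- \<i> * of_real T)"
  have arc_S: "path_image arc \<subseteq> S"
    using path_image_right_semicircle[of T] T by (auto simp: arc_def S_def)
  have diam_S: "path_image diam \<subseteq> S"
    by (auto simp: diam_def S_def closed_segment_def)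
  have ends: "pathfinish arc = pathstart diam" "pathfinish diam = pathstart arc"
    using cis_pi_half cis_inverse[of "pi/2"]
    by (auto simp: arc_def diam_def cis_conv_exp mult.commute exp_minus)
  have "(g has_contour_integral 0) (arc +++ diam)"
  proof (rule Cauchy_theorem_convex[of S g "{}"])
    show "convex S"
      using convex_halfspace_Re_ge[of 0] by (simp add: S_def)
    show "\<And>x. x \<in> interior S - {} \<Longrightarrow> g field_differentiable at x"
      using interior_halfspace_ge[of "1::complex" 0] diff by (simp add: S_def)
  qed (use cont arc_S diam_S ends in \<open>auto simp: S_def path_image_join valid_path_join arc_def diam_def\<close>)
  moreover have "g contour_integrable_on arc" "g contour_integrable_on diam"
    unfolding arc_def diam_def
    using continuous_on_subset[OF cont] arc_S diam_S
    by (auto intro!: contour_integrable_continuous_part_circlepath contour_integrable_continuous_linepath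
        simp: S_def arc_def diam_def)
  ultimately have sum0: "contour_integral arc g + contour_integral diam g = 0"
    using contour_integral_join ends contour_integral_unique
    by (metis arc_def diam_def valid_path_linepath valid_path_part_circlepath)
  have "contour_integral diam g = - contour_integral (linepath (- \<i> * of_real T) (\<i> * of_real T)) g"
    unfolding diam_def
    by (metis contour_integral_reversepath reversepath_linepath valid_path_linepath)
  also have "contour_integral (linepath (- \<i> * of_real T) (\<i> * of_real T)) g
      = \<i> * integral {-T..T} (\<lambda>x. g (Complex 0 x))"
    by (rule contour_integral_linepath_same_Re) (use T in auto)
  finally show ?thesis
    using sum0 by (simp add: arc_def Complex_eq algebra_simps)
qed

text \<open>Jordan-type estimate: on the semicircle of radius \<open>T\<close> the integrand is \<open>O(T\<^sup>-\<^sup>2)\<close>,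
  so the contour integral is \<open>O(T\<^sup>-\<^sup>1)\<close>.\<close>
lemma integral_imag_axis_tendsto_0:
  fixes g :: "complex \<Rightarrow> complex"
  assumes cont: "continuous_on {z. 0 \<le> Re z} g"
    and diff: "\<And>z. 0 < Re z \<Longrightarrow> g field_differentiable at z"
    and bound: "\<And>z. 0 \<le> Re z \<Longrightarrow> cmod (g z) * (cmod z)\<^sup>2 \<le> M"
  shows "((\<lambda>T. integral {-T..T} (\<lambda>t. g (\<i> * of_real t))) \<longlongrightarrow> 0) at_top"
proof (rule Lim_null_comparison)
  have "norm (integral {-T..T} (\<lambda>t. g (\<i> * of_real t))) \<le> M * pi / T" if T: "T > 0" for T
  proof -
    define arc where "arc = part_circlepath 0 T (-pi/2) (pi/2)"
    have "norm (integral {-T..T} (\<lambda>t. g (\<i> * of_real t))) = norm (contour_integral arc g)"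
      using imag_axis_integral_eq_semicircle[OF cont diff T]
      by (metis arc_def mult_1 norm_ii norm_mult)
    also have "\<dots> \<le> (M / T\<^sup>2) * T * (pi/2 - (-pi/2))"
    proof (rule has_contour_integral_bound_part_circlepath)
      have "continuous_on (path_image arc) g"
        using path_image_right_semicircle[of T] T
        by (intro continuous_on_subset[OF cont]) (auto simp: arc_def)
      then show "(g has_contour_integral contour_integral arc g) (part_circlepath 0 T (-pi/2) (pi/2))"
        unfolding arc_def
        by (intro has_contour_integral_integral contour_integrable_continuous_part_circlepath)
      show "0 \<le> M / T\<^sup>2"
        using bound[of 0] by simp
      fix z assume z: "z \<in> path_image (part_circlepath 0 T (-pi/2) (pi/2))"
      then have "cmod z = T" "0 \<le> Re z"
        using path_image_right_semicircle[of T] T by auto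
      with bound[of z] T show "cmod (g z) \<le> M / T\<^sup>2"
        by (simp add: field_simps)
    qed (use T in auto)
    also have "\<dots> = M * pi / T"
      using T by (simp add: field_simps power2_eq_square)
    finally show ?thesis .
  qed
  then show "\<forall>\<^sub>F T in at_top. norm (integral {-T..T} (\<lambda>t. g (\<i> * of_real t))) \<le> M * pi / T"
    by (rule eventually_mono[OF eventually_gt_at_top[of 0]])
  show "((\<lambda>T. M * pi / T) \<longlongrightarrow> 0) at_top"
    by (intro tendsto_divide_0[OF tendsto_const] filterlim_at_top_imp_at_infinity filterlim_ident)
qed

lemma integral_matrix_nth:
  fixes f :: "'a::euclidean_space \<Rightarrow> 'b::real_normed_vector^'n^'m"
  assumes "f integrable_on S"
  shows "integral S (\<lambda>x. f x $ i $ j) = integral S f $ i $ j"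
  using integral_linear[OF assms bounded_linear_compose[OF bounded_linear_vec_nth bounded_linear_vec_nth]]
  by (simp add: o_def)

definition has_pv_integral :: "(real \<Rightarrow> 'a::real_normed_vector) \<Rightarrow> 'a \<Rightarrow> bool"
    (infixr \<open>has'_pv'_integral\<close> 46) where
  "(f has_pv_integral I) \<longleftrightarrow>
     (\<forall>a b. f integrable_on {a..b}) \<and> ((\<lambda>T. integral {-T..T} f) \<longlongrightarrow> I) at_top"

lemma has_pv_integral_add:
  assumes "f has_pv_integral I" "g has_pv_integral J"
  shows "(\<lambda>t. f t + g t) has_pv_integral (I + J)"
  using assms by (auto simp: has_pv_integral_def integral_add intro: integrable_add tendsto_add)

lemma has_pv_integral_linear:
  assumes "f has_pv_integral I" "bounded_linear h"
  shows "(\<lambda>t. h (f t)) has_pv_integral h I"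
proof -
  have "integral {-T..T} (\<lambda>t. h (f t)) = h (integral {-T..T} f)" for T
    using integral_linear[of f "{-T..T}" h] assms by (simp add: has_pv_integral_def o_def)
  with assms show ?thesis
    unfolding has_pv_integral_def
    by (auto intro: bounded_linear.tendsto integrable_linear[unfolded o_def])
qed

lemma has_pv_integral_sandwich:
  fixes f :: "real \<Rightarrow> complex^'n^'m"
  shows "f has_pv_integral I \<Longrightarrow> (\<lambda>t. X ** f t ** Y) has_pv_integral (X ** I ** Y)"
  by (rule has_pv_integral_linear[OF _ bounded_linear_matrix_sandwich])

lemma has_pv_integral_cadj:
  fixes f :: "real \<Rightarrow> complex^'n^'m"
  shows "f has_pv_integral I \<Longrightarrow> (\<lambda>t. cadj (f t)) has_pv_integral (cadj I)"
  by (rule has_pv_integral_linear[OF _ bounded_linear_cadj])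

lemma has_pv_integral_imag_axis_zero:
  fixes F :: "complex \<Rightarrow> complex^'n^'m"
  assumes F: "matrix_analytic_on {z. 0 \<le> Re z} F" and decay: "decays_on {z. 0 \<le> Re z} 2 F"
  shows "(\<lambda>t. F (\<i> * of_real t)) has_pv_integral 0"
  unfolding has_pv_integral_def
proof (intro conjI allI)
  have cont: "continuous_on UNIV (\<lambda>t. F (\<i> * of_real t))"
    by (rule continuous_on_compose2[OF matrix_analytic_on_imp_continuous_on[OF F]])
      (auto intro!: continuous_intros)
  then show "(\<lambda>t. F (\<i> * of_real t)) integrable_on {a..b}" for a b
    by (auto intro: integrable_continuous_interval continuous_on_subset)
  obtain M where M: "\<And>z. 0 \<le> Re z \<Longrightarrow> norm (F z) * (1 + cmod z)\<^sup>2 \<le> M"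
    using decay by (auto simp: decays_on_def)
  show "((\<lambda>T. integral {-T..T} (\<lambda>t. F (\<i> * of_real t))) \<longlongrightarrow> 0) at_top"
  proof (intro vec_tendstoI)
    fix i j
    have "((\<lambda>T. integral {-T..T} (\<lambda>t. F (\<i> * of_real t) $ i $ j)) \<longlongrightarrow> 0) at_top"
    proof (rule integral_imag_axis_tendsto_0)
      show "continuous_on {z. 0 \<le> Re z} (\<lambda>z. F z $ i $ j)"
        using F unfolding matrix_analytic_on_def
        by (meson analytic_imp_holomorphic holomorphic_on_imp_continuous_on)
      show "(\<lambda>z. F z $ i $ j) field_differentiable at z" if "0 < Re z" for z
        using F that unfolding matrix_analytic_on_def
        by (intro analytic_on_imp_differentiable_at[of _ "{z. 0 \<le> Re z}"]) auto
      show "cmod (F z $ i $ j) * (cmod z)\<^sup>2 \<le> M" if "0 \<le> Re z" for z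
      proof -
        have "cmod (F z $ i $ j) * (cmod z)\<^sup>2 \<le> norm (F z) * (1 + cmod z)\<^sup>2"
          by (intro mult_mono power_mono norm_matrix_nth_le) auto
        with M[OF that] show ?thesis
          by linarith
      qed
    qed
    moreover have "(\<lambda>t. F (\<i> * of_real t)) integrable_on {-T..T}" for T
      using cont by (auto intro: integrable_continuous_interval continuous_on_subset)
    then have "integral {-T..T} (\<lambda>t. F (\<i> * of_real t) $ i $ j)
        = integral {-T..T} (\<lambda>t. F (\<i> * of_real t)) $ i $ j" for T
      by (simp add: integral_matrix_nth)
    ultimately show "((\<lambda>T. integral {-T..T} (\<lambda>t. F (\<i> * of_real t)) $ i $ j) \<longlongrightarrow> 0 $ i $ j) at_top"
      by simp
  qed
qed

lemma has_pv_integral_resolvent_product2: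
  assumes "hurwitz A" "hurwitz B"
  shows "(\<lambda>t. resolvent A (\<i> * of_real t) ** X ** resolvent B (\<i> * of_real t)) has_pv_integral 0"
proof (rule has_pv_integral_imag_axis_zero[of "\<lambda>z. resolvent A z ** X ** resolvent B z"])
  show "matrix_analytic_on {z. 0 \<le> Re z} (\<lambda>z. resolvent A z ** X ** resolvent B z)"
    by (intro matrix_analytic_on_mult matrix_analytic_on_resolvent matrix_analytic_on_const assms)
  have "decays_on {z. 0 \<le> Re z} (1 + 0 + 1) (\<lambda>z. resolvent A z ** X ** resolvent B z)"
    by (intro decays_on_mult decays_on_resolvent decays_on_const assms)
  then show "decays_on {z. 0 \<le> Re z} 2 (\<lambda>z. resolvent A z ** X ** resolvent B z)"
    by (simp add: numeral_2_eq_2)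
qed

lemma has_pv_integral_resolvent_product3:
  assumes "hurwitz A" "hurwitz B" "hurwitz C"
  shows "(\<lambda>t. resolvent A (\<i> * of_real t) ** X ** resolvent B (\<i> * of_real t)
      ** Y ** resolvent C (\<i> * of_real t)) has_pv_integral 0"
proof (rule has_pv_integral_imag_axis_zero[of "\<lambda>z. resolvent A z ** X ** resolvent B z ** Y ** resolvent C z"])
  show "matrix_analytic_on {z. 0 \<le> Re z} (\<lambda>z. resolvent A z ** X ** resolvent B z ** Y ** resolvent C z)"
    by (intro matrix_analytic_on_mult matrix_analytic_on_resolvent matrix_analytic_on_const assms)
  have "decays_on {z. 0 \<le> Re z} (1 + 0 + 1 + 0 + 1)
      (\<lambda>z. resolvent A z ** X ** resolvent B z ** Y ** resolvent C z)"
    by (intro decays_on_mult decays_on_resolvent decays_on_const assms)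
  then show "decays_on {z. 0 \<le> Re z} 2 (\<lambda>z. resolvent A z ** X ** resolvent B z ** Y ** resolvent C z)"
    by (rule decays_on_mono) simp
qed

lemma has_integral_inverse_imag_plus_1:
  assumes "0 \<le> T"
  shows "((\<lambda>t. 1 / (\<i> * of_real t + 1)) has_integral of_real (2 * arctan T)) {-T..T}"
proof -
  define F where "F t = of_real (arctan t) - \<i> * of_real (ln (1 + t\<^sup>2) / 2)" for t
  have "(F has_vector_derivative 1 / (\<i> * of_real t + 1)) (at t within {-T..T})" for t
  proof -
    have "(arctan has_real_derivative 1 / (1 + t\<^sup>2)) (at t within {-T..T})"
      using DERIV_arctan[of t] by (simp add: divide_inverse has_field_derivative_at_within)
    moreover have "((\<lambda>t. ln (1 + t\<^sup>2) / 2) has_real_derivative t / (1 + t\<^sup>2)) (at t within {-T..T})"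
      using add_pos_nonneg[of 1 "t\<^sup>2"]
      by (auto intro!: derivative_eq_intros simp: field_split_simps)
    ultimately have "(F has_vector_derivative of_real (1 / (1 + t\<^sup>2)) - \<i> * of_real (t / (1 + t\<^sup>2)))
        (at t within {-T..T})"
      unfolding F_def
      by (intro has_vector_derivative_diff has_vector_derivative_mult_right has_vector_derivative_of_real)
    moreover have "of_real (1 / (1 + t\<^sup>2)) - \<i> * of_real (t / (1 + t\<^sup>2)) = 1 / (\<i> * of_real t + 1)"
      by (simp add: complex_eq_iff Re_divide Im_divide power2_eq_square)
    ultimately show ?thesis
      by simp
  qed
  then have "((\<lambda>t. 1 / (\<i> * of_real t + 1)) has_integral F T - F (-T)) {-T..T}"
    using assms by (intro fundamental_theorem_of_calculus) auto
  then show ?thesis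
    by (simp add: F_def arctan_minus)
qed

lemma has_pv_integral_resolvent_minus_1:
  "(\<lambda>t. resolvent (mat (-1)) (\<i> * of_real t)) has_pv_integral (pi *\<^sub>R mat 1 :: complex^'n^'n)"
proof -
  have R: "resolvent (mat (-1)) (\<i> * of_real t) = (mat (1 / (\<i> * of_real t + 1)) :: complex^'n^'n)" for t
    by (simp add: resolvent_mat complex_eq_iff)
  have int: "integral {-T..T} (\<lambda>t. resolvent (mat (-1)) (\<i> * of_real t))
      = (mat (of_real (2 * arctan T)) :: complex^'n^'n)" if "0 \<le> T" for T
    using has_integral_linear[OF has_integral_inverse_imag_plus_1[OF that] bounded_linear_mat]
    by (simp add: R o_def) (rule integral_unique)
  have lim: "((\<lambda>T. mat (of_real (2 * arctan T)) :: complex^'n^'n) \<longlongrightarrow> mat (of_real pi)) at_top"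
    using tendsto_mult_left[OF tendsto_arctan_at_top, of 2]
    by (intro bounded_linear.tendsto[OF bounded_linear_mat] tendsto_of_real) simp
  have "((\<lambda>T. integral {-T..T} (\<lambda>t. resolvent (mat (-1)) (\<i> * of_real t)))
      \<longlongrightarrow> (pi *\<^sub>R mat 1 :: complex^'n^'n)) at_top"
    unfolding mat_of_real[symmetric]
    by (rule Lim_transform_eventually[OF lim]) (auto simp: int eventually_at_top_linorder intro!: exI[of _ 0])
  moreover have "continuous_on UNIV (\<lambda>t. resolvent (mat (-1)) (\<i> * of_real t) :: complex^'n^'n)"
    by (rule continuous_on_compose2[OF matrix_analytic_on_imp_continuous_on[OF
          matrix_analytic_on_resolvent[OF hurwitz_mat]]]) (auto intro!: continuous_intros)
  ultimately show ?thesis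
    by (auto simp: has_pv_integral_def intro: integrable_continuous_interval continuous_on_subset)
qed

text \<open>The resolvent itself decays only like \<open>|z|\<^sup>-\<^sup>1\<close>; subtracting the resolvent of \<open>-I\<close>
  leaves a product of two resolvents, whose principal value vanishes.\<close>
lemma has_pv_integral_resolvent:
  fixes A :: "complex^'n^'n"
  assumes "hurwitz A"
  shows "(\<lambda>t. resolvent A (\<i> * of_real t)) has_pv_integral (pi *\<^sub>R mat 1)"
proof -
  have "resolvent A (\<i> * of_real t) = resolvent (mat (-1)) (\<i> * of_real t)
      + resolvent A (\<i> * of_real t) ** (A - mat (-1)) ** resolvent (mat (-1)) (\<i> * of_real t)" for t
    using resolvent_difference[of "\<i> * of_real t" A "mat (-1)"]
      hurwitz_invertible[OF assms, of "\<i> * of_real t"]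
      hurwitz_invertible[OF hurwitz_mat[of "-1"], of "\<i> * of_real t"]
    by (simp add: algebra_simps)
  moreover have "(\<lambda>t. resolvent (mat (-1)) (\<i> * of_real t)
      + resolvent A (\<i> * of_real t) ** (A - mat (-1)) ** resolvent (mat (-1)) (\<i> * of_real t))
      has_pv_integral (pi *\<^sub>R mat 1 + 0)"
    by (intro has_pv_integral_add has_pv_integral_resolvent_minus_1
        has_pv_integral_resolvent_product2 assms hurwitz_mat) simp
  ultimately show ?thesis
    by simp
qed

lemma has_integral_UNIV_symmetric_tendsto:
  fixes f :: "real \<Rightarrow> 'a::banach"
  assumes "(f has_integral I) UNIV"
  shows "((\<lambda>T. integral {-T..T} f) \<longlongrightarrow> I) at_top"
proof (rule tendstoI)
  fix e :: real assume "e > 0"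
  then obtain B where "B > 0" and B: "\<And>a b. ball 0 B \<subseteq> cbox a b \<Longrightarrow> norm (integral (cbox a b) f - I) < e"
    using assms[unfolded has_integral_alt'] by auto
  have "dist (integral {-T..T} f) I < e" if "B \<le> T" for T
  proof -
    have "ball 0 B \<subseteq> cbox (-T) T"
      using that by (auto simp: dist_real_def)
    from B[OF this] show ?thesis
      by (simp add: dist_norm)
  qed
  then show "\<forall>\<^sub>F T in at_top. dist (integral {-T..T} f) I < e"
    by (rule eventually_mono[OF eventually_ge_at_top])
qed

lemma has_integral_if_has_pv_integral_decays:
  fixes f :: "real \<Rightarrow> 'a::banach"
  assumes pv: "f has_pv_integral I" and decay: "decays_on UNIV 2 f"
  shows "(f has_integral I) UNIV"
proof -
  obtain M where M: "\<And>x. norm (f x) * (1 + \<bar>x\<bar>)\<^sup>2 \<le> M"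
    using decay by (auto simp: decays_on_def)
  have "(\<lambda>x::real. inverse (1 + x\<^sup>2)) integrable_on UNIV"
    using integrable_inverse_1_plus_square by (intro integrable_on_lborel) (simp add: set_integrable_def)
  from integrable_on_cmult_left[OF this]
  have dominant: "(\<lambda>x. M * inverse (1 + x\<^sup>2)) integrable_on UNIV"
    by simp
  have bound: "norm (f x) \<le> M * inverse (1 + x\<^sup>2)" for x
  proof -
    have pos: "0 < 1 + x\<^sup>2"
      by (simp add: add_pos_nonneg)
    have "1 + x\<^sup>2 \<le> (1 + \<bar>x\<bar>)\<^sup>2"
      by (simp add: power2_eq_square algebra_simps)
    then have "norm (f x) * (1 + x\<^sup>2) \<le> M"
      using M[of x] mult_left_mono[of "1 + x\<^sup>2" "(1 + \<bar>x\<bar>)\<^sup>2" "norm (f x)"] by simp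
    then have "norm (f x) \<le> M / (1 + x\<^sup>2)"
      using pos by (simp add: pos_le_divide_eq)
    then show ?thesis
      by (simp add: divide_inverse)
  qed
  have "f integrable_on UNIV"
  proof (rule integrable_on_all_intervals_UNIV[OF _ bound dominant])
    show "f integrable_on cbox a b" for a b
      using pv by (simp add: has_pv_integral_def)
  qed
  then have "((\<lambda>T. integral {-T..T} f) \<longlongrightarrow> integral UNIV f) at_top"
    by (intro has_integral_UNIV_symmetric_tendsto integrable_integral)
  moreover have "((\<lambda>T. integral {-T..T} f) \<longlongrightarrow> I) at_top"
    using pv by (simp add: has_pv_integral_def)
  ultimately have "integral UNIV f = I"
    by (rule tendsto_unique[OF trivial_limit_at_top_linorder])
  with \<open>f integrable_on UNIV\<close> show ?thesis
    using integrable_integral by blast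
qed

section \<open>The expansion of the integrand\<close>

text \<open>Read \<open>a\<^sub>k\<close> as the adjoint resolvent \<open>R\<^sub>k(s)\<^sup>*\<close> and \<open>r\<^sub>k\<close> as the resolvent \<open>R\<^sub>k(s)\<close>
  at a point \<open>s\<close> of the imaginary axis; the hypotheses are the resolvent forms of the six Sylvester
  equations.\<close>
lemma sylvester_chain_expansion:
  assumes E12: "a1 ** N1 ** r2 = Q12 ** r2 + a1 ** Q12"
    and E23: "r2 ** N2 ** a3 = P23 ** a3 + r2 ** P23"
    and E34: "a3 ** N3 ** r4 = Q34 ** r4 + a3 ** Q34"
    and E45: "r4 ** N4 ** a5 = P45 ** a5 + r4 ** P45"
    and E14: "a1 ** (Q12 ** P23 ** N3 + N1 ** P23 ** Q34) ** r4 = Q14 ** r4 + a1 ** Q14"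
    and E25: "r2 ** (P23 ** N3 ** P45) ** a5 = P25 ** a5 + r2 ** P25"
  shows "a1 ** N1 ** r2 ** N2 ** a3 ** N3 ** r4 ** N4 ** (a5 :: 'a::comm_ring_1^'n5^'n5) =
     a1 ** N1 ** P23 ** a3 ** Q34 ** N4 ** a5 + a1 ** Q14 ** N4 ** a5
   + Q14 ** P45 ** a5 + Q14 ** r4 ** P45 + Q12 ** r2 ** P23 ** N3 ** r4 ** P45
   + Q12 ** P25 ** a5 + Q12 ** r2 ** P25"
proof -
  note distrib = matrix_add_ldistrib matrix_add_rdistrib matrix_mul_assoc
  have "a1 ** N1 ** r2 ** N2 ** a3 ** N3 ** r4 ** N4 ** a5
      = a1 ** N1 ** (r2 ** N2 ** a3) ** N3 ** r4 ** N4 ** a5"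
    by (simp add: matrix_mul_assoc)
  also have "\<dots> = a1 ** N1 ** P23 ** (a3 ** N3 ** r4) ** N4 ** a5
      + (a1 ** N1 ** r2) ** P23 ** N3 ** r4 ** N4 ** a5"
    by (simp add: E23 distrib)
  also have "\<dots> = a1 ** (Q12 ** P23 ** N3 + N1 ** P23 ** Q34) ** r4 ** N4 ** a5
      + a1 ** N1 ** P23 ** a3 ** Q34 ** N4 ** a5 + Q12 ** r2 ** P23 ** N3 ** (r4 ** N4 ** a5)"
    by (simp add: E34 E12 distrib algebra_simps)
  also have "\<dots> = (Q14 ** r4 + a1 ** Q14) ** N4 ** a5
      + a1 ** N1 ** P23 ** a3 ** Q34 ** N4 ** a5 + Q12 ** r2 ** P23 ** N3 ** (P45 ** a5 + r4 ** P45)"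
    by (simp only: E14 E45)
  also have "\<dots> = Q14 ** (r4 ** N4 ** a5) + a1 ** Q14 ** N4 ** a5
      + a1 ** N1 ** P23 ** a3 ** Q34 ** N4 ** a5 + Q12 ** (r2 ** (P23 ** N3 ** P45) ** a5)
      + Q12 ** r2 ** P23 ** N3 ** r4 ** P45"
    by (simp add: distrib algebra_simps)
  also have "\<dots> = Q14 ** (P45 ** a5 + r4 ** P45) + a1 ** Q14 ** N4 ** a5
      + a1 ** N1 ** P23 ** a3 ** Q34 ** N4 ** a5 + Q12 ** (P25 ** a5 + r2 ** P25)
      + Q12 ** r2 ** P23 ** N3 ** r4 ** P45"
    by (simp only: E45 E25)
  also have "\<dots> = a1 ** N1 ** P23 ** a3 ** Q34 ** N4 ** a5 + a1 ** Q14 ** N4 ** a5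
      + Q14 ** P45 ** a5 + Q14 ** r4 ** P45 + Q12 ** r2 ** P23 ** N3 ** r4 ** P45
      + Q12 ** P25 ** a5 + Q12 ** r2 ** P25"
    by (simp add: distrib algebra_simps)
  finally show ?thesis .
qed

lemma has_pv_integral_expansion_terms:
  assumes "hurwitz A1" "hurwitz A2" "hurwitz A3" "hurwitz A4" "hurwitz A5"
  shows "(\<lambda>t. cadj (resolvent A1 (\<i> * of_real t)) ** N1 ** P23 ** cadj (resolvent A3 (\<i> * of_real t))
          ** Q34 ** N4 ** cadj (resolvent A5 (\<i> * of_real t))
      + cadj (resolvent A1 (\<i> * of_real t)) ** Q14 ** N4 ** cadj (resolvent A5 (\<i> * of_real t))
      + Q14 ** P45 ** cadj (resolvent A5 (\<i> * of_real t))
      + Q14 ** resolvent A4 (\<i> * of_real t) ** P45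
      + Q12 ** resolvent A2 (\<i> * of_real t) ** P23 ** N3 ** resolvent A4 (\<i> * of_real t) ** P45
      + Q12 ** P25 ** cadj (resolvent A5 (\<i> * of_real t))
      + Q12 ** resolvent A2 (\<i> * of_real t) ** P25)
    has_pv_integral (2 * pi) *\<^sub>R (Q12 ** P25 + Q14 ** P45)"
proof -
  have total: "cadj 0 + cadj 0
      + (Q14 ** P45) ** cadj (pi *\<^sub>R mat 1) ** mat 1 + Q14 ** (pi *\<^sub>R mat 1) ** P45
      + Q12 ** 0 ** P45
      + (Q12 ** P25) ** cadj (pi *\<^sub>R mat 1) ** mat 1 + Q12 ** (pi *\<^sub>R mat 1) ** P25
    = (2 * pi) *\<^sub>R (Q12 ** P25 + Q14 ** P45)"
  proof -
    have "(2 * pi) *\<^sub>R (Q12 ** P25 + Q14 ** P45)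
        = pi *\<^sub>R (Q12 ** P25 + Q14 ** P45) + pi *\<^sub>R (Q12 ** P25 + Q14 ** P45)"
      by (metis mult_2 scaleR_left_distrib)
    then show ?thesis
      by (simp add: cadj_scaleR cadj_mat matrix_scalar_ac scaleR_add_right add_ac
          flip: scalar_matrix_assoc)
  qed
  have "(\<lambda>t. cadj (resolvent A5 (\<i> * of_real t) ** cadj (Q34 ** N4) ** resolvent A3 (\<i> * of_real t)
          ** cadj (N1 ** P23) ** resolvent A1 (\<i> * of_real t))
      + cadj (resolvent A5 (\<i> * of_real t) ** cadj (Q14 ** N4) ** resolvent A1 (\<i> * of_real t))
      + (Q14 ** P45) ** cadj (resolvent A5 (\<i> * of_real t)) ** mat 1
      + Q14 ** resolvent A4 (\<i> * of_real t) ** P45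
      + Q12 ** (resolvent A2 (\<i> * of_real t) ** (P23 ** N3) ** resolvent A4 (\<i> * of_real t)) ** P45
      + (Q12 ** P25) ** cadj (resolvent A5 (\<i> * of_real t)) ** mat 1
      + Q12 ** resolvent A2 (\<i> * of_real t) ** P25)
    has_pv_integral (cadj 0 + cadj 0
      + (Q14 ** P45) ** cadj (pi *\<^sub>R mat 1) ** mat 1 + Q14 ** (pi *\<^sub>R mat 1) ** P45
      + Q12 ** 0 ** P45
      + (Q12 ** P25) ** cadj (pi *\<^sub>R mat 1) ** mat 1 + Q12 ** (pi *\<^sub>R mat 1) ** P25)"
    by (intro has_pv_integral_add has_pv_integral_cadj has_pv_integral_sandwich
        has_pv_integral_resolvent has_pv_integral_resolvent_product2
        has_pv_integral_resolvent_product3 assms)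
  then show ?thesis
    unfolding total by (simp add: cadj_matrix_mult matrix_mul_assoc)
qed

lemma has_pv_integral_resolvent_chain:
  assumes h: "hurwitz A1" "hurwitz A2" "hurwitz A3" "hurwitz A4" "hurwitz A5"
    and E12: "cadj A1 ** Q12 + Q12 ** A2 + N1 = 0"
    and E23: "A2 ** P23 + P23 ** cadj A3 + N2 = 0"
    and E34: "cadj A3 ** Q34 + Q34 ** A4 + N3 = 0"
    and E45: "A4 ** P45 + P45 ** cadj A5 + N4 = 0"
    and E14: "cadj A1 ** Q14 + Q14 ** A4 + (Q12 ** P23 ** N3 + N1 ** P23 ** Q34) = 0"
    and E25: "A2 ** P25 + P25 ** cadj A5 + P23 ** N3 ** P45 = 0"
  shows "(\<lambda>t. cadj (resolvent A1 (\<i> * of_real t)) ** N1 ** resolvent A2 (\<i> * of_real t) ** N2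
      ** cadj (resolvent A3 (\<i> * of_real t)) ** N3 ** resolvent A4 (\<i> * of_real t) ** N4
      ** cadj (resolvent A5 (\<i> * of_real t)))
    has_pv_integral (2 * pi) *\<^sub>R (Q12 ** P25 + Q14 ** P45)"
proof -
  have imag: "Re (\<i> * of_real t) = 0" for t
    by simp
  show ?thesis
    unfolding sylvester_chain_expansion[OF
      resolvent_sylvester_cadj_left[OF h(1,2) imag E12] resolvent_sylvester_cadj_right[OF h(2,3) imag E23]
      resolvent_sylvester_cadj_left[OF h(3,4) imag E34] resolvent_sylvester_cadj_right[OF h(4,5) imag E45]
      resolvent_sylvester_cadj_left[OF h(1,4) imag E14] resolvent_sylvester_cadj_right[OF h(2,5) imag E25]]
    by (rule has_pv_integral_expansion_terms[OF h])
qed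

lemma decays_on_tf:
  assumes "hurwitz A"
  shows "decays_on UNIV 1 (\<lambda>t. tf C A B (\<i> * of_real t))"
proof -
  have "decays_on UNIV (0 + 1 + 0) (\<lambda>t. C ** resolvent A (\<i> * of_real t) ** B)"
    by (intro decays_on_mult decays_on_const decays_on_imag_axis decays_on_resolvent assms)
  then show ?thesis
    by (simp add: tf_resolvent)
qed

theorem lemmaB2:
  fixes A1 :: "complex^'n1^'n1" and B1 :: "complex^'m1^'n1" and C1 :: "complex^'n1^'p"
    and A2 :: "complex^'n2^'n2" and B2 :: "complex^'m^'n2" and C2 :: "complex^'n2^'p"
    and A3 :: "complex^'n3^'n3" and B3 :: "complex^'m^'n3" and C3 :: "complex^'n3^'q"
    and A4 :: "complex^'n4^'n4" and B4 :: "complex^'r^'n4" and C4 :: "complex^'n4^'q"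
    and A5 :: "complex^'n5^'n5" and B5 :: "complex^'r^'n5" and C5 :: "complex^'n5^'p5"
    and Q12 :: "complex^'n2^'n1" and P23 :: "complex^'n3^'n2"
    and Q34 :: "complex^'n4^'n3" and P45 :: "complex^'n5^'n4"
    and Q14 :: "complex^'n4^'n1" and P25 :: "complex^'n5^'n2"
  assumes "hurwitz A1" "hurwitz A2" "hurwitz A3" "hurwitz A4" "hurwitz A5"
    and "cadj A1 ** Q12 + Q12 ** A2 + cadj C1 ** C2 = 0"
    and "A2 ** P23 + P23 ** cadj A3 + B2 ** cadj B3 = 0"
    and "cadj A3 ** Q34 + Q34 ** A4 + cadj C3 ** C4 = 0"
    and "A4 ** P45 + P45 ** cadj A5 + B4 ** cadj B5 = 0"
    and "cadj A1 ** Q14 + Q14 ** A4 + Q12 ** P23 ** cadj C3 ** C4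
           + cadj C1 ** C2 ** P23 ** Q34 = 0"
    and "A2 ** P25 + P25 ** cadj A5 + P23 ** cadj C3 ** C4 ** P45 = 0"
  shows "((\<lambda>l::real.
            cadj (tf C1 A1 B1 (\<i> * of_real l)) ** tf C2 A2 B2 (\<i> * of_real l)
         ** cadj (tf C3 A3 B3 (\<i> * of_real l)) ** tf C4 A4 B4 (\<i> * of_real l)
         ** cadj (tf C5 A5 B5 (\<i> * of_real l)))
        has_integral ((2 * pi) *\<^sub>R (cadj B1 ** (Q12 ** P25 + Q14 ** P45) ** cadj C5))) UNIV"
  (is "(?f has_integral _) UNIV")
proof (rule has_integral_if_has_pv_integral_decays)
  have "(\<lambda>t. cadj (resolvent A1 (\<i> * of_real t)) ** (cadj C1 ** C2) ** resolvent A2 (\<i> * of_real t)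
      ** (B2 ** cadj B3) ** cadj (resolvent A3 (\<i> * of_real t)) ** (cadj C3 ** C4)
      ** resolvent A4 (\<i> * of_real t) ** (B4 ** cadj B5) ** cadj (resolvent A5 (\<i> * of_real t)))
    has_pv_integral (2 * pi) *\<^sub>R (Q12 ** P25 + Q14 ** P45)"
    by (rule has_pv_integral_resolvent_chain) (use assms in \<open>simp_all add: matrix_mul_assoc add.assoc\<close>)
  from has_pv_integral_sandwich[OF this, of "cadj B1" "cadj C5"]
  show "?f has_pv_integral (2 * pi) *\<^sub>R (cadj B1 ** (Q12 ** P25 + Q14 ** P45) ** cadj C5)"
    by (simp add: tf_resolvent cadj_matrix_mult matrix_mul_assoc matrix_scalar_ac scalar_matrix_assoc)
  have "decays_on UNIV (1 + 1 + 1 + 1 + 1) ?f"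
    by (intro decays_on_mult decays_on_cadj decays_on_tf assms(1-5))
  then show "decays_on UNIV 2 ?f"
    by (rule decays_on_mono) simp
qed

end
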